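(* Let $\phi:H\to G$ be a homomorphism of graphs, where $G$ is a finite graph. Then the induced functor of free categories $\mathcal{F}(\phi):\mathcal{F}(H)\to\mathcal{F}(G)$ is finitary if and only if $H$ is finite.
   Context: A graph is a directed multigraph: a set of nodes and a set of edges, each edge having a source node and a target node; it is finite if it has finitely many nodes and edges. A homomorphism of graphs maps nodes to nodes and edges to edges preserving source and target. $\mathcal{F}(G)$ denotes the free category generated by $G$: objects are nodes of $G$ and arrows are finite paths (including empty paths as identities), composed by concatenation; $\mathcal{F}(\phi)$ acts by $\phi$ on nodes and edgewise on paths. A functor $p:\mathcal{D}\to\mathcal{C}$ is finitary if for every object $A$ of $\mathcal{C}$ the set $p^{-1}(A)$ of objects of $\mathcal{D}$ mapped to $A$ is finite, and for every arrow $w$ of $\mathcal{C}$ the set $p^{-1}(w)$ of arrows of $\mathcal{D}$ mapped to $w$ is finite. *)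

theory Defs
  imports Main
begin

record ('v, 'e) graph =
  nodes :: "'v set"
  edges :: "'e set"
  src :: "'e \<Rightarrow> 'v"
  tgt :: "'e \<Rightarrow> 'v"

definition wf_graph :: "('v, 'e) graph \<Rightarrow> bool" where
  "wf_graph G \<longleftrightarrow> (\<forall>e\<in>edges G. src G e \<in> nodes G \<and> tgt G e \<in> nodes G)"

definition finite_graph :: "('v, 'e) graph \<Rightarrow> bool" where
  "finite_graph G \<longleftrightarrow> finite (nodes G) \<and> finite (edges G)"

definition graph_hom ::
  "('v, 'e) graph \<Rightarrow> ('w, 'f) graph \<Rightarrow> ('v \<Rightarrow> 'w) \<Rightarrow> ('e \<Rightarrow> 'f) \<Rightarrow> bool" where
  "graph_hom H G fv fe \<longleftrightarrow>
     (\<forall>x\<in>nodes H. fv x \<in> nodes G) \<and>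
     (\<forall>e\<in>edges H. fe e \<in> edges G \<and> src G (fe e) = fv (src H e) \<and> tgt G (fe e) = fv (tgt H e))"

fun is_path :: "('v, 'e) graph \<Rightarrow> 'v \<Rightarrow> 'e list \<Rightarrow> 'v \<Rightarrow> bool" where
  "is_path G a [] b \<longleftrightarrow> a \<in> nodes G \<and> a = b"
| "is_path G a (e # es) b \<longleftrightarrow> e \<in> edges G \<and> src G e = a \<and> a \<in> nodes G \<and> is_path G (tgt G e) es b"

text \<open>Free category F(G): objects are the nodes, arrows are triples (source, path, target)
  (the empty path at a is the identity at a), composition is concatenation.\<close>
definition free_objs :: "('v, 'e) graph \<Rightarrow> 'v set" where
  "free_objs G = nodes G"

definition free_arrs :: "('v, 'e) graph \<Rightarrow> ('v \<times> 'e list \<times> 'v) set" where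
  "free_arrs G = {(a, es, b). is_path G a es b}"

definition free_fun_obj :: "('v \<Rightarrow> 'w) \<Rightarrow> 'v \<Rightarrow> 'w" where
  "free_fun_obj fv = fv"

definition free_fun_arr ::
  "('v \<Rightarrow> 'w) \<Rightarrow> ('e \<Rightarrow> 'f) \<Rightarrow> 'v \<times> 'e list \<times> 'v \<Rightarrow> 'w \<times> 'f list \<times> 'w" where
  "free_fun_arr fv fe = (\<lambda>(a, es, b). (fv a, map fe es, fv b))"

definition finitary ::
  "'a set \<Rightarrow> 'b set \<Rightarrow> 'c set \<Rightarrow> 'd set \<Rightarrow> ('a \<Rightarrow> 'c) \<Rightarrow> ('b \<Rightarrow> 'd) \<Rightarrow> bool" where
  "finitary DObj DArr CObj CArr po pa \<longleftrightarrow>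
     (\<forall>A\<in>CObj. finite {x\<in>DObj. po x = A}) \<and>
     (\<forall>w\<in>CArr. finite {u\<in>DArr. pa u = w})"

end

theory Submission
  imports Defs
begin

text \<open>A finite graph has only finitely many paths of each length, and \<open>\<F>(\<phi>)\<close> preserves
  lengths, so its fibres are finite. Conversely, if \<open>G\<close> is finite then the fibres of
  \<open>\<F>(\<phi>)\<close> over the nodes of \<open>G\<close> cover the nodes of \<open>H\<close>, and those over the
  one-edge paths of \<open>G\<close> contain all one-edge paths of \<open>H\<close>, which are in bijection with
  the edges of \<open>H\<close>.\<close>

lemma finite_if_finite_fibres:
  assumes "finite Y" and "f ` X \<subseteq> Y" and "\<And>y. y \<in> Y \<Longrightarrow> finite {x \<in> X. f x = y}"
  shows "finite X"
proof (rule rev_finite_subset)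
  show "finite (\<Union>y\<in>Y. {x \<in> X. f x = y})"
    using assms(1,3) by (rule finite_UN_I)
  show "X \<subseteq> (\<Union>y\<in>Y. {x \<in> X. f x = y})"
    using assms(2) by blast
qed

lemma finitary_finite_objs:
  assumes "finitary DObj DArr CObj CArr po pa"
    and "finite CObj" and "po ` DObj \<subseteq> CObj"
  shows "finite DObj"
  by (rule finite_if_finite_fibres[of CObj po]) (use assms in \<open>auto simp: finitary_def\<close>)

lemma finitary_finite_arrs:
  assumes "finitary DObj DArr CObj CArr po pa"
    and "X \<subseteq> DArr" and "finite Y" and "Y \<subseteq> CArr" and "pa ` X \<subseteq> Y"
  shows "finite X"
proof (rule finite_if_finite_fibres[of Y pa])
  fix y assume "y \<in> Y"
  then have "finite {u \<in> DArr. pa u = y}"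
    using assms(1,4) by (auto simp: finitary_def)
  then show "finite {x \<in> X. pa x = y}"
    by (rule rev_finite_subset) (use assms(2) in blast)
qed (use assms in auto)

lemma is_path_imp_nodes_edges:
  "is_path G a es b \<Longrightarrow> a \<in> nodes G \<and> b \<in> nodes G \<and> set es \<subseteq> edges G"
  by (induction es arbitrary: a) auto

lemma finite_free_arrs_length:
  assumes "finite_graph G"
  shows "finite {(a, es, b) \<in> free_arrs G. length es = n}"
proof (rule finite_subset)
  show "{(a, es, b) \<in> free_arrs G. length es = n}
          \<subseteq> nodes G \<times> {es. set es \<subseteq> edges G \<and> length es = n} \<times> nodes G"
    by (auto simp: free_arrs_def dest: is_path_imp_nodes_edges)
  show "finite (nodes G \<times> {es. set es \<subseteq> edges G \<and> length es = n} \<times> nodes G)"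
    using assms by (simp add: finite_graph_def finite_lists_length_eq)
qed

lemma finitary_free_fun_if_finite_graph:
  assumes "finite_graph H"
  shows "finitary (free_objs H) (free_arrs H) (free_objs G) (free_arrs G)
           (free_fun_obj fv) (free_fun_arr fv fe)"
  unfolding finitary_def
proof (intro conjI ballI)
  fix A
  show "finite {x \<in> free_objs H. free_fun_obj fv x = A}"
    using assms by (simp add: finite_graph_def free_objs_def)
next
  fix w assume "w \<in> free_arrs G"
  obtain x ws y where w: "w = (x, ws, y)"
    by (cases w) auto
  have "{u \<in> free_arrs H. free_fun_arr fv fe u = w}
          \<subseteq> {(a, es, b) \<in> free_arrs H. length es = length ws}"
    by (auto simp: w free_fun_arr_def)
  then show "finite {u \<in> free_arrs H. free_fun_arr fv fe u = w}"
    using finite_free_arrs_length[OF assms] by (rule finite_subset)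
qed

definition edge_arr :: "('v, 'e) graph \<Rightarrow> 'e \<Rightarrow> 'v \<times> 'e list \<times> 'v" where
  "edge_arr G e = (src G e, [e], tgt G e)"

lemma inj_edge_arr: "inj_on (edge_arr G) A"
  by (rule inj_onI) (simp add: edge_arr_def)

lemma edge_arr_in_free_arrs:
  "wf_graph G \<Longrightarrow> e \<in> edges G \<Longrightarrow> edge_arr G e \<in> free_arrs G"
  by (simp add: wf_graph_def edge_arr_def free_arrs_def)

lemma free_fun_arr_edge_arr:
  "graph_hom H G fv fe \<Longrightarrow> e \<in> edges H \<Longrightarrow> free_fun_arr fv fe (edge_arr H e) = edge_arr G (fe e)"
  by (simp add: graph_hom_def edge_arr_def free_fun_arr_def)

lemma finite_graph_if_finitary_free_fun:
  assumes "wf_graph H" and "wf_graph G" and hom: "graph_hom H G fv fe" and "finite_graph G"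
    and fin: "finitary (free_objs H) (free_arrs H) (free_objs G) (free_arrs G)
                (free_fun_obj fv) (free_fun_arr fv fe)"
  shows "finite_graph H"
proof -
  have "finite (nodes H)"
  proof (rule finitary_finite_objs[OF fin, unfolded free_objs_def])
    show "finite (nodes G)"
      using assms(4) by (simp add: finite_graph_def)
    show "free_fun_obj fv ` nodes H \<subseteq> nodes G"
      using hom by (auto simp: graph_hom_def free_fun_obj_def)
  qed
  moreover have "finite (edge_arr H ` edges H)"
  proof (rule finitary_finite_arrs[OF fin])
    show "edge_arr H ` edges H \<subseteq> free_arrs H"
      using edge_arr_in_free_arrs[OF assms(1)] by blast
    show "finite (edge_arr G ` edges G)"
      using assms(4) by (simp add: finite_graph_def)
    show "edge_arr G ` edges G \<subseteq> free_arrs G"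
      using edge_arr_in_free_arrs[OF assms(2)] by blast
    have "fe ` edges H \<subseteq> edges G"
      using hom by (auto simp: graph_hom_def)
    then show "free_fun_arr fv fe ` edge_arr H ` edges H \<subseteq> edge_arr G ` edges G"
      using free_fun_arr_edge_arr[OF hom] by (simp add: image_image image_subset_iff)
  qed
  then have "finite (edges H)"
    using inj_edge_arr by (rule finite_imageD)
  ultimately show ?thesis
    by (simp add: finite_graph_def)
qed

theorem mainTheorem2:
  fixes H :: "('v, 'e) graph" and G :: "('w, 'f) graph"
    and fv :: "'v \<Rightarrow> 'w" and fe :: "'e \<Rightarrow> 'f"
  assumes "wf_graph H" and "wf_graph G"
    and "graph_hom H G fv fe"
    and "finite_graph G"
  shows "finitary (free_objs H) (free_arrs H) (free_objs G) (free_arrs G)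
           (free_fun_obj fv) (free_fun_arr fv fe)
         \<longleftrightarrow> finite_graph H"
  using finite_graph_if_finitary_free_fun[OF assms] finitary_free_fun_if_finite_graph[of H G fv fe]
  by (rule iffI)

end
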